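(* Let $|\Psi\rangle$ be a normalized state of the periodic chain of length $L$ which is simultaneously an eigenvector of the translation operator $U$, of $H$, and of the charges $Q_\alpha$ and $Q_\beta$ (with $\alpha\neq\beta$). Then for every $x$, $$\langle\Psi|\,J_\alpha(x)\,q_\beta(0)-q_\alpha(x)\,J_\beta(1)\,|\Psi\rangle=\langle\Psi|J_\alpha(0)|\Psi\rangle\,\langle\Psi|q_\beta(0)|\Psi\rangle-\langle\Psi|q_\alpha(0)|\Psi\rangle\,\langle\Psi|J_\beta(0)|\Psi\rangle ,$$ where by translation invariance the one-point functions on the right-hand side do not depend on the site.
   Context: Consider a spin chain of length $L$ with periodic boundary conditions, Hilbert space $(\mathbb{C}^N)^{\otimes L}$, sites labelled by $x\in\mathbb{Z}$ modulo $L$. Let $U$ be the unitary one-site translation operator. A local operator family $\mathcal{O}(x)$ is called translation covariant if $\mathcal{O}(x+1)=U\mathcal{O}(x)U^{-1}$. The chain has a Hamiltonian $H=\sum_{x=1}^L h(x)$ with $h(x)$ local and translation covariant, and a family of mutually commuting conserved charges $Q_\alpha=\sum_{x=1}^L q_\alpha(x)$, with $q_\alpha(x)$ translation covariant local operators (charge densities), $[Q_\alpha,Q_\beta]=0$, $[H,Q_\alpha]=0$, $[U,Q_\alpha]=[U,H]=0$. The current operators $J_\alpha(x)$ are translation covariant local operators defined by the continuity equation $$ i\,[H,q_\alpha(x)]=J_\alpha(x)-J_\alpha(x+1)\quad\text{for all }x.$$ *)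

theory Defs
  imports "HOL-Analysis.Analysis"
begin

text \<open>Operators on the finite-dimensional Hilbert space are complex square matrices
  indexed by a finite type 'n (the computational basis of (C^N)^{tensor L}).\<close>

type_synonym 'n op = "complex^'n^'n"

definition adj :: "'n::finite op \<Rightarrow> 'n op" where
  "adj A = (\<chi> i j. cnj (A $ j $ i))"

fun mpow :: "'n::finite op \<Rightarrow> nat \<Rightarrow> 'n op" where
  "mpow A 0 = mat 1"
| "mpow A (Suc k) = A ** mpow A k"

definition comm :: "'n::finite op \<Rightarrow> 'n op \<Rightarrow> 'n op" where
  "comm A B = A ** B - B ** A"

definition unitary_op :: "'n::finite op \<Rightarrow> bool" where
  "unitary_op U \<longleftrightarrow> U ** adj U = mat 1 \<and> adj U ** U = mat 1"

definition hermitian_op :: "'n::finite op \<Rightarrow> bool" where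
  "hermitian_op A \<longleftrightarrow> adj A = A"

definition transl_cov :: "'n::finite op \<Rightarrow> (int \<Rightarrow> 'n op) \<Rightarrow> bool" where
  "transl_cov U Op \<longleftrightarrow> (\<forall>x. Op (x + 1) = U ** Op x ** matrix_inv U)"

definition is_eigvec :: "'n::finite op \<Rightarrow> complex^'n \<Rightarrow> bool" where
  "is_eigvec A v \<longleftrightarrow> v \<noteq> 0 \<and> (\<exists>c. A *v v = c *s v)"

definition expval :: "complex^'n \<Rightarrow> 'n::finite op \<Rightarrow> complex" where
  "expval \<psi> A = (\<Sum>i\<in>UNIV. cnj (\<psi> $ i) * (A *v \<psi>) $ i)"

definition normalized :: "complex^'n::finite \<Rightarrow> bool" where
  "normalized \<psi> \<longleftrightarrow> (\<Sum>i\<in>UNIV. cnj (\<psi> $ i) * \<psi> $ i) = 1"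

end

theory Submission
  imports Defs
begin

text \<open>
  As \<open>\<Psi>\<close> is an eigenvector of the Hermitian \<open>H\<close>, \<open>\<langle>[H, q\<^sub>\<alpha>(x) q\<^sub>\<beta>(0)]\<rangle> = 0\<close>. Expanding the
  commutator with the continuity equation and shifting one correlator by a site (\<open>\<Psi>\<close> is
  translation invariant) shows that \<open>C(x) = \<langle>J\<^sub>\<alpha>(x) q\<^sub>\<beta>(0) - q\<^sub>\<alpha>(x) J\<^sub>\<beta>(1)\<rangle>\<close> does not depend
  on \<open>x\<close>. Summing \<open>C\<close> over one period and translating each term so that the densities add up to
  the charges gives \<open>L C = \<langle>J\<^sub>\<alpha>(L+1) Q\<^sub>\<beta>\<rangle> - \<langle>Q\<^sub>\<alpha> J\<^sub>\<beta>(1)\<rangle> = \<mu> \<langle>J\<^sub>\<alpha>\<rangle> - \<lambda> \<langle>J\<^sub>\<beta>\<rangle>\<close>,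
  while the charge eigenvalues are \<open>\<lambda> = L \<langle>q\<^sub>\<alpha>\<rangle>\<close> and \<open>\<mu> = L \<langle>q\<^sub>\<beta>\<rangle>\<close>.
\<close>

lemma matrix_mul_add_right: "((A::'a::semiring_1^'n^'m) + B) ** C = A ** C + B ** C"
  by (simp add: vec_eq_iff matrix_matrix_mult_def distrib_right sum.distrib)

lemma matrix_mul_diff_left: "(A::'a::ring_1^'n^'m) ** (B - C) = A ** B - A ** C"
  by (simp add: vec_eq_iff matrix_matrix_mult_def right_diff_distrib sum_subtractf)

lemma matrix_mul_diff_right: "((A::'a::ring_1^'n^'m) - B) ** C = A ** C - B ** C"
  by (simp add: vec_eq_iff matrix_matrix_mult_def left_diff_distrib sum_subtractf)

lemma matrix_mul_sum_left:
  fixes f :: "'b \<Rightarrow> 'a::semiring_1^'p^'n"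
  shows "finite S \<Longrightarrow> A ** (\<Sum>x\<in>S. f x) = (\<Sum>x\<in>S. A ** f x)"
  by (induction S rule: finite_induct) (simp_all add: matrix_add_ldistrib)

lemma matrix_mul_sum_right:
  fixes f :: "'b \<Rightarrow> 'a::semiring_1^'n^'m"
  shows "finite S \<Longrightarrow> (\<Sum>x\<in>S. f x) ** A = (\<Sum>x\<in>S. f x ** A)"
  by (induction S rule: finite_induct) (simp_all add: matrix_mul_add_right)

lemma mat_vector_mult: "(mat c :: 'a::semiring_1^'n::finite^'n) *v v = c *s v"
proof -
  have "(\<Sum>j\<in>UNIV. (if i = j then c else 0) * v $ j) = c * v $ i" for i
    by (simp add: if_distrib[where f = "\<lambda>x. x * _"] cong: if_cong)
  then show ?thesis
    by (simp add: vec_eq_iff matrix_vector_mult_def mat_def)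
qed

lemma adj_adj [simp]: "adj (adj A) = A"
  by (simp add: adj_def vec_eq_iff)

lemma mat_mult_commute: "mat c ** (A::'a::comm_semiring_1^'n::finite^'n) = A ** mat c"
  by (simp add: vec_eq_iff matrix_matrix_mult_def mat_def if_distrib if_distribR mult.commute
      cong: if_cong)

lemma comm_matrix_mult: "comm H (X ** Y) = comm H X ** Y + X ** comm H (Y::'n::finite op)"
  by (simp add: comm_def matrix_mul_diff_left matrix_mul_diff_right matrix_mul_assoc)

lemma sum_cnj_mult_matrix_vector_adj:
  fixes A :: "'n::finite op"
  shows "(\<Sum>i\<in>UNIV. cnj (v $ i) * (A *v w) $ i) = (\<Sum>j\<in>UNIV. cnj ((adj A *v v) $ j) * w $ j)"
proof -
  have "(\<Sum>i\<in>UNIV. cnj (v $ i) * (A *v w) $ i) = (\<Sum>i\<in>UNIV. \<Sum>j\<in>UNIV. cnj (v $ i) * A $ i $ j * w $ j)"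
    by (simp add: matrix_vector_mult_def sum_distrib_left mult.assoc)
  also have "\<dots> = (\<Sum>j\<in>UNIV. \<Sum>i\<in>UNIV. cnj (v $ i) * A $ i $ j * w $ j)"
    by (rule sum.swap)
  also have "\<dots> = (\<Sum>j\<in>UNIV. cnj ((adj A *v v) $ j) * w $ j)"
    by (simp add: matrix_vector_mult_def adj_def sum_distrib_left mult_ac)
  finally show ?thesis .
qed

lemma expval_add: "expval p (A + B) = expval p A + expval p B"
  by (simp add: expval_def matrix_vector_mult_add_rdistrib distrib_left sum.distrib)

lemma expval_diff: "expval p (A - B) = expval p A - expval p B"
  by (simp add: expval_def matrix_vector_mult_diff_rdistrib right_diff_distrib sum_subtractf)

lemma expval_sum: "finite S \<Longrightarrow> expval p (\<Sum>x\<in>S. f x) = (\<Sum>x\<in>S. expval p (f x))"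
  by (induction S rule: finite_induct) (simp_all add: expval_add, simp add: expval_def)

lemma expval_mat_mult: "expval p (mat c ** A) = c * expval p A"
  by (simp add: expval_def matrix_vector_mul_assoc[symmetric] mat_vector_mult sum_distrib_left mult_ac)

lemma expval_mat_1: "normalized p \<Longrightarrow> expval p (mat 1) = 1"
  by (simp add: expval_def normalized_def)

lemma expval_mult_eigvec_right:
  "A *v p = c *s p \<Longrightarrow> expval p (B ** A) = c * expval p B"
  by (simp add: expval_def matrix_vector_mul_assoc[symmetric] vector_scalar_commute
      sum_distrib_left mult_ac)

lemma expval_mult_eigvec_left:
  assumes "adj A *v p = d *s p"
  shows "expval p (A ** B) = cnj d * expval p B"
proof -
  have "expval p (A ** B) = (\<Sum>i\<in>UNIV. cnj (p $ i) * (A *v (B *v p)) $ i)"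
    by (simp add: expval_def matrix_vector_mul_assoc)
  also have "\<dots> = (\<Sum>j\<in>UNIV. cnj ((adj A *v p) $ j) * (B *v p) $ j)"
    by (rule sum_cnj_mult_matrix_vector_adj)
  also have "\<dots> = cnj d * expval p B"
    by (simp add: assms expval_def sum_distrib_left mult_ac)
  finally show ?thesis .
qed

lemma expval_eigvec: "A *v p = c *s p \<Longrightarrow> normalized p \<Longrightarrow> expval p A = c"
  using expval_mult_eigvec_right[of A p c "mat 1"] by (simp add: expval_mat_1)

lemma expval_mult_hermitian_eigvec:
  assumes "hermitian_op A" "A *v p = c *s p" "normalized p"
  shows "expval p (A ** X) = c * expval p X"
proof -
  have adj_eig: "adj A *v p = c *s p"
    using assms(1,2) by (simp add: hermitian_op_def)
  have "c = expval p A"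
    using expval_eigvec[OF assms(2,3)] ..
  also have "\<dots> = cnj c"
    using expval_mult_eigvec_left[OF adj_eig, of "mat 1"] by (simp add: expval_mat_1 assms(3))
  finally have "cnj c = c" ..
  then show ?thesis
    using expval_mult_eigvec_left[OF adj_eig] by simp
qed

lemma expval_comm_hermitian_eigvec:
  "hermitian_op H \<Longrightarrow> is_eigvec H p \<Longrightarrow> normalized p \<Longrightarrow> expval p (comm H X) = 0"
  by (auto simp: is_eigvec_def comm_def expval_diff expval_mult_hermitian_eigvec
      expval_mult_eigvec_right)

lemma matrix_inv_unitary: "unitary_op U \<Longrightarrow> matrix_inv U = adj U"
  unfolding unitary_op_def matrix_inv_def
  by (rule some_equality) (auto, metis matrix_mul_assoc matrix_mul_rid)

lemma unitary_eigval_unimodular: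
  assumes "unitary_op U" "U *v p = u *s p" "normalized p"
  shows "cnj u * u = 1"
proof -
  have "1 = expval p (adj U ** U)"
    using assms(1,3) by (simp add: unitary_op_def expval_mat_1)
  also have "\<dots> = u * expval p (adj U)"
    by (rule expval_mult_eigvec_right[OF assms(2)])
  also have "expval p (adj U) = cnj u"
    using expval_mult_eigvec_left[of "adj U" p u "mat 1"] assms(2,3) by (simp add: expval_mat_1)
  finally show ?thesis
    by (simp add: mult.commute)
qed

lemma adj_unitary_eigvec:
  assumes "unitary_op U" "U *v p = u *s p" "normalized p"
  shows "adj U *v p = cnj u *s p"
proof -
  have "adj U *v (U *v p) = p"
    using assms(1) by (simp add: unitary_op_def matrix_vector_mul_assoc)
  then have "u *s (adj U *v p) = p"
    by (simp add: assms(2) vector_scalar_commute)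
  then have "cnj u *s (u *s (adj U *v p)) = cnj u *s p"
    by simp
  then show ?thesis
    using unitary_eigval_unimodular[OF assms] by simp
qed

lemma int_shift_invariant_const:
  fixes f :: "int \<Rightarrow> 'a"
  assumes "\<And>k. f (k + 1) = f k"
  shows "f k = f 0"
proof (induction k rule: int_induct[where k = 0])
  case (step2 i)
  then show ?case using assms[of "i - 1"] by simp
qed (use assms in simp_all)

lemma transl_cov_mult_shift:
  assumes "unitary_op U" "transl_cov U A" "transl_cov U B"
  shows "transl_cov U (\<lambda>z. A (z + a) ** B (z + b))"
  unfolding transl_cov_def
proof
  fix z
  have inv_U: "matrix_inv U ** U = mat 1"
    using assms(1) by (simp add: matrix_inv_unitary unitary_op_def)
  have "A (z + 1 + a) ** B (z + 1 + b)
      = U ** A (z + a) ** matrix_inv U ** (U ** B (z + b) ** matrix_inv U)"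
    using assms(2)[unfolded transl_cov_def, THEN spec, of "z + a"]
      assms(3)[unfolded transl_cov_def, THEN spec, of "z + b"]
    by (simp add: ac_simps)
  also have "\<dots> = U ** A (z + a) ** (matrix_inv U ** U) ** B (z + b) ** matrix_inv U"
    by (simp add: matrix_mul_assoc)
  also have "\<dots> = U ** (A (z + a) ** B (z + b)) ** matrix_inv U"
    by (simp add: inv_U matrix_mul_assoc)
  finally show "A (z + 1 + a) ** B (z + 1 + b) = U ** (A (z + a) ** B (z + b)) ** matrix_inv U" .
qed

lemma expval_continuity_correlator:
  assumes "hermitian_op H" "is_eigvec H p" "normalized p"
    and continuity_a: "\<And>x. mat \<i> ** comm H (qa x) = Ja x - Ja (x + 1)"
    and continuity_b: "\<And>y. mat \<i> ** comm H (qb y) = Jb y - Jb (y + 1)"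
  shows "expval p (Ja (x + 1) ** qb y) - expval p (Ja x ** qb y)
       = expval p (qa x ** Jb y) - expval p (qa x ** Jb (y + 1))"
proof -
  have "mat \<i> ** (qa x ** comm H (qb y)) = qa x ** (mat \<i> ** comm H (qb y))"
    by (metis matrix_mul_assoc mat_mult_commute)
  then have "mat \<i> ** comm H (qa x ** qb y) = (Ja x - Ja (x + 1)) ** qb y + qa x ** (Jb y - Jb (y + 1))"
    by (simp add: comm_matrix_mult matrix_add_ldistrib matrix_mul_assoc continuity_a[symmetric]
        continuity_b)
  moreover have "expval p (mat \<i> ** comm H (qa x ** qb y)) = 0"
    by (simp add: expval_mat_mult expval_comm_hermitian_eigvec assms(1-3))
  ultimately have "expval p ((Ja x - Ja (x + 1)) ** qb y + qa x ** (Jb y - Jb (y + 1))) = 0"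
    by simp
  then show ?thesis
    unfolding expval_add matrix_mul_diff_left matrix_mul_diff_right expval_diff
    by (simp add: algebra_simps)
qed

context
  fixes U :: "'n::finite op" and p :: "complex^'n"
  assumes unitary: "unitary_op U" and eig_U: "is_eigvec U p" and normalized: "normalized p"
begin

lemma expval_unitary_conj: "expval p (U ** X ** matrix_inv U) = expval p X"
proof -
  obtain u where u: "U *v p = u *s p"
    using eig_U by (auto simp: is_eigvec_def)
  have adj_eig: "adj U *v p = cnj u *s p"
    by (rule adj_unitary_eigvec[OF unitary u normalized])
  show ?thesis
    using unitary_eigval_unimodular[OF unitary u normalized]
    by (simp add: matrix_inv_unitary[OF unitary] expval_mult_eigvec_right[OF adj_eig]
        expval_mult_eigvec_left[OF adj_eig] mult.commute)
qed

lemma expval_transl_cov: "transl_cov U A \<Longrightarrow> expval p (A k) = expval p (A 0)"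
  by (rule int_shift_invariant_const[where f = "\<lambda>k. expval p (A k)"])
    (simp add: transl_cov_def expval_unitary_conj)

lemma expval_correlator_shift:
  assumes "transl_cov U A" "transl_cov U B"
  shows "expval p (A (x + k) ** B (y + k)) = expval p (A x ** B y)"
proof -
  have "expval p (A (k + x) ** B (k + y)) = expval p (A (0 + x) ** B (0 + y))"
    by (rule expval_transl_cov[OF transl_cov_mult_shift[OF unitary assms]])
  then show ?thesis
    by (simp add: add.commute)
qed

lemma expval_sum_period:
  assumes "transl_cov U A"
  shows "expval p (\<Sum>x\<in>{1..int L}. A x) = of_nat L * expval p (A 0)"
proof -
  have "expval p (\<Sum>x\<in>{1..int L}. A x) = (\<Sum>x\<in>{1..int L}. expval p (A 0))"
    unfolding expval_sum[OF finite_atLeastAtMost_int] by (rule sum.cong[OF refl expval_transl_cov[OF assms]])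
  then show ?thesis
    by simp
qed

lemma current_charge_correlator_const:
  assumes "hermitian_op H" "is_eigvec H p"
    and "transl_cov U qa" "transl_cov U Jb"
    and "\<And>x. mat \<i> ** comm H (qa x) = Ja x - Ja (x + 1)"
    and "\<And>y. mat \<i> ** comm H (qb y) = Jb y - Jb (y + 1)"
  shows "expval p (Ja x ** qb 0 - qa x ** Jb 1) = expval p (Ja 0 ** qb 0 - qa 0 ** Jb 1)"
proof (rule int_shift_invariant_const[where f = "\<lambda>x. expval p (Ja x ** qb 0 - qa x ** Jb 1)"])
  fix x
  have "expval p (qa (x + 1) ** Jb (0 + 1)) = expval p (qa x ** Jb 0)"
    by (rule expval_correlator_shift[OF assms(3,4)])
  moreover have "expval p (Ja (x + 1) ** qb 0) - expval p (Ja x ** qb 0)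
      = expval p (qa x ** Jb 0) - expval p (qa x ** Jb (0 + 1))"
    by (rule expval_continuity_correlator[where qa = qa and qb = qb, OF assms(1,2) normalized assms(5,6)])
  ultimately show "expval p (Ja (x + 1) ** qb 0 - qa (x + 1) ** Jb 1) = expval p (Ja x ** qb 0 - qa x ** Jb 1)"
    by (simp add: expval_diff algebra_simps)
qed

lemma sum_current_charge_correlator:
  fixes qa Jb :: "int \<Rightarrow> 'n op"
  assumes "transl_cov U Ja" "transl_cov U qb"
  shows "(\<Sum>x\<in>{1..int L}. expval p (Ja x ** qb 0 - qa x ** Jb 1))
       = expval p (Ja (int L + 1) ** (\<Sum>y\<in>{1..int L}. qb y)) - expval p ((\<Sum>x\<in>{1..int L}. qa x) ** Jb 1)"
proof -
  have "expval p (Ja x ** qb 0) = expval p (Ja (int L + 1) ** qb (int L + 1 - x))" for x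
    using expval_correlator_shift[OF assms, of x "int L + 1 - x" 0] by simp
  then have "(\<Sum>x\<in>{1..int L}. expval p (Ja x ** qb 0))
      = (\<Sum>x\<in>{1..int L}. expval p (Ja (int L + 1) ** qb (int L + 1 - x)))"
    by simp
  also have "\<dots> = (\<Sum>y\<in>{1..int L}. expval p (Ja (int L + 1) ** qb y))"
    by (rule sum.reindex_bij_witness[of _ "\<lambda>y. int L + 1 - y" "\<lambda>x. int L + 1 - x"]) auto
  moreover have "(\<Sum>x\<in>{1..int L}. expval p (qa x ** Jb 1)) = expval p ((\<Sum>x\<in>{1..int L}. qa x) ** Jb 1)"
    by (simp add: expval_sum matrix_mul_sum_right)
  ultimately show ?thesis
    by (simp add: expval_diff sum_subtractf expval_sum matrix_mul_sum_left)
qed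

end

theorem mainTheorem2:
  fixes N L :: nat
    and U H :: "'n::finite op"
    and h :: "int \<Rightarrow> 'n op"
    and Q :: "'i \<Rightarrow> 'n op"
    and q J :: "'i \<Rightarrow> int \<Rightarrow> 'n op"
    and \<Psi> :: "complex^'n"
    and \<alpha> \<beta> :: 'i
  assumes L_pos: "L \<ge> 1"
    and dim: "CARD('n) = N ^ L"
    and U_unitary: "unitary_op U"
    and U_periodic: "mpow U L = mat 1"
    and H_herm: "hermitian_op H"
    and Q_herm: "\<And>a. hermitian_op (Q a)"
    and h_cov: "transl_cov U h"
    and H_def: "H = (\<Sum>x\<in>{1..int L}. h x)"
    and q_cov: "\<And>a. transl_cov U (q a)"
    and Q_def: "\<And>a. Q a = (\<Sum>x\<in>{1..int L}. q a x)"
    and QQ: "\<And>a b. comm (Q a) (Q b) = 0"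
    and HQ: "\<And>a. comm H (Q a) = 0"
    and UQ: "\<And>a. comm U (Q a) = 0"
    and UH: "comm U H = 0"
    and J_cov: "\<And>a. transl_cov U (J a)"
    and continuity: "\<And>a x. mat \<i> ** comm H (q a x) = J a x - J a (x + 1)"
    and norm_Psi: "normalized \<Psi>"
    and eig_U: "is_eigvec U \<Psi>"
    and eig_H: "is_eigvec H \<Psi>"
    and eig_Qa: "is_eigvec (Q \<alpha>) \<Psi>"
    and eig_Qb: "is_eigvec (Q \<beta>) \<Psi>"
    and ab: "\<alpha> \<noteq> \<beta>"
  shows "\<forall>x::int.
    expval \<Psi> (J \<alpha> x ** q \<beta> 0 - q \<alpha> x ** J \<beta> 1)
      = expval \<Psi> (J \<alpha> 0) * expval \<Psi> (q \<beta> 0) - expval \<Psi> (q \<alpha> 0) * expval \<Psi> (J \<beta> 0)"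
proof
  fix x :: int
  obtain la where la: "Q \<alpha> *v \<Psi> = la *s \<Psi>"
    using eig_Qa by (auto simp: is_eigvec_def)
  obtain mu where mu: "Q \<beta> *v \<Psi> = mu *s \<Psi>"
    using eig_Qb by (auto simp: is_eigvec_def)
  have la_eq: "la = of_nat L * expval \<Psi> (q \<alpha> 0)" and mu_eq: "mu = of_nat L * expval \<Psi> (q \<beta> 0)"
    using expval_eigvec[OF la norm_Psi] expval_eigvec[OF mu norm_Psi]
      expval_sum_period[OF U_unitary eig_U norm_Psi q_cov] by (simp_all add: Q_def)
  have const: "expval \<Psi> (J \<alpha> y ** q \<beta> 0 - q \<alpha> y ** J \<beta> 1) = expval \<Psi> (J \<alpha> 0 ** q \<beta> 0 - q \<alpha> 0 ** J \<beta> 1)"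
    for y by (rule current_charge_correlator_const[where Ja = "J \<alpha>" and qb = "q \<beta>",
        OF U_unitary eig_U norm_Psi H_herm eig_H q_cov J_cov continuity continuity])
  define C where "C = expval \<Psi> (J \<alpha> 0 ** q \<beta> 0 - q \<alpha> 0 ** J \<beta> 1)"
  have "of_nat L * C = (\<Sum>y\<in>{1..int L}. expval \<Psi> (J \<alpha> y ** q \<beta> 0 - q \<alpha> y ** J \<beta> 1))"
    by (simp add: sum.cong[OF refl const] C_def)
  also have "\<dots> = expval \<Psi> (J \<alpha> (int L + 1) ** Q \<beta>) - expval \<Psi> (Q \<alpha> ** J \<beta> 1)"
    unfolding Q_def by (rule sum_current_charge_correlator[OF U_unitary eig_U norm_Psi J_cov q_cov])
  also have "\<dots> = mu * expval \<Psi> (J \<alpha> 0) - la * expval \<Psi> (J \<beta> 0)"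
    using expval_transl_cov[OF U_unitary eig_U norm_Psi J_cov, of \<alpha> "int L + 1"]
      expval_transl_cov[OF U_unitary eig_U norm_Psi J_cov, of \<beta> 1]
    by (simp add: expval_mult_eigvec_right[OF mu] expval_mult_hermitian_eigvec[OF Q_herm la norm_Psi])
  also have "\<dots> = of_nat L * (expval \<Psi> (J \<alpha> 0) * expval \<Psi> (q \<beta> 0) - expval \<Psi> (q \<alpha> 0) * expval \<Psi> (J \<beta> 0))"
    by (simp add: la_eq mu_eq algebra_simps)
  finally show "expval \<Psi> (J \<alpha> x ** q \<beta> 0 - q \<alpha> x ** J \<beta> 1)
      = expval \<Psi> (J \<alpha> 0) * expval \<Psi> (q \<beta> 0) - expval \<Psi> (q \<alpha> 0) * expval \<Psi> (J \<beta> 0)"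
    using L_pos const[of x] by (simp add: C_def)
qed

end
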